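(* Let $p,q\ge 1$ and let $P(p,q)$ be the parallelogram hexagonal system with $p$ rows of $q$ hexagons each, so it has $n=pq$ hexagons. Then $cf(P(p,q))=pq+1=n+1$.
   Context: A hexagonal system (HS) is a finite 2-connected plane graph in which every interior face is a regular hexagon of the hexagonal lattice; it is drawn with some edges vertical, so that hexagons form horizontal rows in which consecutive hexagons share a vertical edge. $P(p,q)$ consists of $p$ horizontal rows, each a linear chain of $q$ hexagons, where each row lies directly above the previous one shifted half a hexagon to the right (so hexagon $j$ of row $i+1$ shares edges with hexagons $j$ and $j+1$ of row $i$ when they exist); it is a parallelogram (rhombus-shaped) benzenoid. In particular $P(1,q)$ is the linear hexagonal chain of $q$ hexagons. For a perfect matching $M$, a forcing set of $M$ is a subset of $M$ contained in no other perfect matching; a complete forcing set of $G$ is a set $S\subseteq E(G)$ with $S\cap M$ a forcing set of $M$ for every perfect matching $M$; $cf(G)$ is the minimum size of a complete forcing set. *)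

theory Defs
  imports Main
begin

text \<open>Hexagonal lattice realised as the brick-wall lattice on int \<times> int:
  horizontal edges (x,y)-(x+1,y), vertical edges (x,y)-(x,y+1) when x+y is even.
  The hexagon with lower-left corner (a,b) (a+b even) has vertices
  (a,b),(a+1,b),(a+2,b),(a,b+1),(a+1,b+1),(a+2,b+1); its two vertical edges
  are the ones shared with its horizontal neighbours in the same row.\<close>

type_synonym vtx = "int \<times> int"

definition hex_edges :: "int \<Rightarrow> int \<Rightarrow> vtx set set" where
  "hex_edges a b =
     {{(a,b),(a+1,b)}, {(a+1,b),(a+2,b)},
      {(a,b+1),(a+1,b+1)}, {(a+1,b+1),(a+2,b+1)},
      {(a,b),(a,b+1)}, {(a+2,b),(a+2,b+1)}}"

text \<open>P(p,q): row i (i < p) consists of q hexagons; hexagon j of row i has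
  lower-left corner (2j+i, i), so row i+1 is shifted half a hexagon right.\<close>

definition para_edges :: "nat \<Rightarrow> nat \<Rightarrow> vtx set set" where
  "para_edges p q = (\<Union>i<p. \<Union>j<q. hex_edges (int (2*j + i)) (int i))"

definition para_verts :: "nat \<Rightarrow> nat \<Rightarrow> vtx set" where
  "para_verts p q = \<Union> (para_edges p q)"

definition perfect_matching :: "'v set \<Rightarrow> 'v set set \<Rightarrow> 'v set set \<Rightarrow> bool" where
  "perfect_matching V E M \<longleftrightarrow> M \<subseteq> E \<and> (\<forall>v\<in>V. \<exists>!e. e \<in> M \<and> v \<in> e)"

definition forcing_set :: "'v set \<Rightarrow> 'v set set \<Rightarrow> 'v set set \<Rightarrow> 'v set set \<Rightarrow> bool" where
  "forcing_set V E M S \<longleftrightarrow> S \<subseteq> M \<and>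
     (\<forall>M'. perfect_matching V E M' \<and> S \<subseteq> M' \<longrightarrow> M' = M)"

definition complete_forcing_set :: "'v set \<Rightarrow> 'v set set \<Rightarrow> 'v set set \<Rightarrow> bool" where
  "complete_forcing_set V E S \<longleftrightarrow> S \<subseteq> E \<and>
     (\<forall>M. perfect_matching V E M \<longrightarrow> forcing_set V E M (S \<inter> M))"

definition cf :: "'v set \<Rightarrow> 'v set set \<Rightarrow> nat" where
  "cf V E = (LEAST k. \<exists>S. complete_forcing_set V E S \<and> finite S \<and> card S = k)"

end

(*
  The perfect matchings of P(p,q) correspond to monotone cuts: hexagon row i contains exactly one
  matched vertical edge, at some position C i, C is non-decreasing, and the horizontal edges are
  then forced along each level of vertices by a parity argument.

  Upper bound: a walk through all pq hexagons that enters below the bottom row, leaves above the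
  top row and uses only left, down and up-right steps crosses pq + 1 edges.  If two perfect
  matchings differ, so do the regions left of their cuts somewhere on the walk, and where the walk
  enters or leaves such a difference region it crosses an edge lying in the first matching but not
  in the second.  Hence the crossed edges form a complete forcing set.

  Lower bound: the pairs of cuts differing in a single hexagon, together with the pair of extreme
  cuts, give pq + 1 pairs of perfect matchings M, M' whose differences M - M' are pairwise
  disjoint, and a complete forcing set meets each of these differences.
*)

theory Submission
  imports Defs
begin

section \<open>Coordinates\<close>

(* Level y consists of the vertices of height y, its vertex at position r being (y - 1 + r, y).
   hedge y r joins positions r and r + 1 of level y; vedge i k joins levels i and i + 1 and is
   shared by hexagons k - 1 and k of row i. *)

definition hedge :: "int \<Rightarrow> int \<Rightarrow> vtx set" where
  "hedge y r = {(y - 1 + r, y), (y + r, y)}"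

definition vedge :: "int \<Rightarrow> int \<Rightarrow> vtx set" where
  "vedge i k = {(i + 2*k, i), (i + 2*k, i + 1)}"

definition is_hedge :: "nat \<Rightarrow> nat \<Rightarrow> int \<Rightarrow> int \<Rightarrow> bool" where
  "is_hedge p q y r \<longleftrightarrow>
     (0 \<le> y \<and> y < int p \<and> 1 \<le> r \<and> r \<le> 2 * int q) \<or> (1 \<le> y \<and> y \<le> int p \<and> 0 \<le> r \<and> r \<le> 2 * int q - 1)"

definition is_vertex :: "nat \<Rightarrow> nat \<Rightarrow> int \<Rightarrow> int \<Rightarrow> bool" where
  "is_vertex p q y r \<longleftrightarrow>
     (0 \<le> y \<and> y < int p \<and> 1 \<le> r \<and> r \<le> 2 * int q + 1) \<or> (1 \<le> y \<and> y \<le> int p \<and> 0 \<le> r \<and> r \<le> 2 * int q)"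

definition vedge_at :: "int \<Rightarrow> int \<Rightarrow> vtx set" where
  "vedge_at y r = (if odd r then vedge y (r div 2) else vedge (y - 1) (r div 2))"

lemma hedge_eq_iff [simp]: "hedge y r = hedge y' r' \<longleftrightarrow> y = y' \<and> r = r'"
  unfolding hedge_def by (auto simp: doubleton_eq_iff)

lemma vedge_eq_iff [simp]: "vedge i k = vedge i' k' \<longleftrightarrow> i = i' \<and> k = k'"
  unfolding vedge_def by (auto simp: doubleton_eq_iff)

lemma hedge_neq_vedge [simp]: "hedge y r \<noteq> vedge i k" "vedge i k \<noteq> hedge y r"
  unfolding vedge_def hedge_def by (auto simp: doubleton_eq_iff)

lemma hedge_neq_vedge_at [simp]: "hedge y r \<noteq> vedge_at y' r'"
  unfolding vedge_at_def by simp

lemma vertex_in_hedge_iff: "(y - 1 + r, y) \<in> hedge y' r' \<longleftrightarrow> y' = y \<and> (r' = r \<or> r' = r - 1)"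
  unfolding hedge_def by auto

lemma vertex_in_vedge_iff:
  "(y - 1 + r, y) \<in> vedge i k \<longleftrightarrow> (i = y \<and> r = 2*k + 1) \<or> (i = y - 1 \<and> r = 2*k)"
  unfolding vedge_def by auto

lemma vedge_at_even [simp]: "vedge_at y (2*k) = vedge (y - 1) k"
  unfolding vedge_at_def by simp

lemma vedge_at_odd [simp]: "vedge_at y (2*k + 1) = vedge y k"
  unfolding vedge_at_def by simp

lemma hex_edges_eq:
  "hex_edges (2*j + i) i = {hedge i (2*j + 1), hedge i (2*j + 2), hedge (i + 1) (2*j),
     hedge (i + 1) (2*j + 1), vedge i j, vedge i (j + 1)}"
  unfolding hex_edges_def hedge_def vedge_def by (simp add: algebra_simps insert_commute)

lemma hex_edges_subset_para_edges:
  assumes "0 \<le> i" "i < int p" "0 \<le> j" "j < int q"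
  shows "hex_edges (2*j + i) i \<subseteq> para_edges p q"
proof -
  have "nat i < p" "nat j < q" "int (2 * nat j + nat i) = 2*j + i" "int (nat i) = i"
    using assms by auto
  then show ?thesis unfolding para_edges_def by force
qed

lemma para_edges_cases:
  assumes "e \<in> para_edges p q"
  obtains y r where "e = hedge y r" "is_hedge p q y r"
    | i k where "e = vedge i k" "0 \<le> i" "i < int p" "0 \<le> k" "k \<le> int q"
proof -
  from assms obtain i j where "i < p" "j < q" "e \<in> hex_edges (2 * int j + int i) (int i)"
    unfolding para_edges_def by force
  then show ?thesis using that unfolding hex_edges_eq is_hedge_def by (elim insertE) force+
qed

lemma hedge_in_para_edges_iff: "hedge y r \<in> para_edges p q \<longleftrightarrow> is_hedge p q y r"
proof
  assume "hedge y r \<in> para_edges p q"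
  then show "is_hedge p q y r" by (cases rule: para_edges_cases) auto
next
  assume "is_hedge p q y r"
  then consider "0 \<le> y" "y < int p" "1 \<le> r" "r \<le> 2 * int q"
    | "1 \<le> y" "y \<le> int p" "0 \<le> r" "r \<le> 2 * int q - 1"
    unfolding is_hedge_def by blast
  then show "hedge y r \<in> para_edges p q"
  proof cases
    case 1
    define j where "j = (r - 1) div 2"
    have "r = 2*j + 1 \<or> r = 2*j + 2" "0 \<le> j" "j < int q" using 1 unfolding j_def by presburger+
    then have "hedge y r \<in> hex_edges (2*j + y) y" unfolding hex_edges_eq by auto
    then show ?thesis using hex_edges_subset_para_edges[of y p j q] 1 \<open>0 \<le> j\<close> \<open>j < int q\<close> by auto
  next
    case 2
    define j where "j = r div 2"
    have "r = 2*j \<or> r = 2*j + 1" "0 \<le> j" "j < int q" using 2 unfolding j_def by presburger+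
    then have "hedge y r \<in> hex_edges (2*j + (y - 1)) (y - 1)" unfolding hex_edges_eq by auto
    then show ?thesis using hex_edges_subset_para_edges[of "y - 1" p j q] 2 \<open>0 \<le> j\<close> \<open>j < int q\<close>
      by auto
  qed
qed

lemma vedge_in_para_edges_iff:
  assumes "1 \<le> q"
  shows "vedge i k \<in> para_edges p q \<longleftrightarrow> 0 \<le> i \<and> i < int p \<and> 0 \<le> k \<and> k \<le> int q"
proof
  assume "vedge i k \<in> para_edges p q"
  then show "0 \<le> i \<and> i < int p \<and> 0 \<le> k \<and> k \<le> int q" by (cases rule: para_edges_cases) auto
next
  assume h: "0 \<le> i \<and> i < int p \<and> 0 \<le> k \<and> k \<le> int q"
  show "vedge i k \<in> para_edges p q"
  proof (cases "k < int q")
    case True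
    have "vedge i k \<in> hex_edges (2*k + i) i" unfolding hex_edges_eq by simp
    then show ?thesis using hex_edges_subset_para_edges[of i p k q] h True by auto
  next
    case False
    have "vedge i k \<in> hex_edges (2*(k - 1) + i) i" unfolding hex_edges_eq by simp
    then show ?thesis using hex_edges_subset_para_edges[of i p "k - 1" q] h False assms by auto
  qed
qed

lemma vertex_in_para_verts_iff:
  assumes "1 \<le> q"
  shows "(y - 1 + r, y) \<in> para_verts p q \<longleftrightarrow> is_vertex p q y r"
proof
  assume "(y - 1 + r, y) \<in> para_verts p q"
  then obtain e where e: "e \<in> para_edges p q" "(y - 1 + r, y) \<in> e" unfolding para_verts_def by blast
  from e(1) show "is_vertex p q y r"
  proof (cases rule: para_edges_cases)
    case (1 y' r')
    then show ?thesis using e(2) by (auto simp: vertex_in_hedge_iff is_hedge_def is_vertex_def)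
  next
    case (2 i k)
    then show ?thesis using e(2) by (auto simp: vertex_in_vedge_iff is_vertex_def)
  qed
next
  assume "is_vertex p q y r"
  then have "is_hedge p q y r \<or> is_hedge p q y (r - 1)"
    using assms unfolding is_vertex_def is_hedge_def by auto
  then have "hedge y r \<in> para_edges p q \<or> hedge y (r - 1) \<in> para_edges p q"
    unfolding hedge_in_para_edges_iff .
  moreover have "(y - 1 + r, y) \<in> hedge y r" "(y - 1 + r, y) \<in> hedge y (r - 1)"
    unfolding vertex_in_hedge_iff by simp_all
  ultimately show "(y - 1 + r, y) \<in> para_verts p q" unfolding para_verts_def by blast
qed

lemma edges_at_vertex:
  assumes "e \<in> para_edges p q"
  shows "(y - 1 + r, y) \<in> e \<longleftrightarrow> e \<in> {hedge y (r - 1), hedge y r, vedge_at y r}"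
  using assms
proof (cases rule: para_edges_cases)
  case (1 y' r')
  then show ?thesis by (auto simp: vertex_in_hedge_iff)
next
  case (2 i k)
  then show ?thesis by (auto simp: vertex_in_vedge_iff vedge_at_def)
qed

definition exactly_one :: "bool \<Rightarrow> bool \<Rightarrow> bool \<Rightarrow> bool" where
  "exactly_one a b c \<longleftrightarrow> (a \<and> \<not> b \<and> \<not> c) \<or> (\<not> a \<and> b \<and> \<not> c) \<or> (\<not> a \<and> \<not> b \<and> c)"

lemma ex1_mem_iff_exactly_one:
  assumes "\<And>e. e \<in> M \<Longrightarrow> v \<in> e \<longleftrightarrow> e \<in> {a, b, c}" and "a \<noteq> b" "a \<noteq> c" "b \<noteq> c"
  shows "(\<exists>!e. e \<in> M \<and> v \<in> e) \<longleftrightarrow> exactly_one (a \<in> M) (b \<in> M) (c \<in> M)"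
proof -
  have "(\<lambda>e. e \<in> M \<and> v \<in> e) = (\<lambda>e. e \<in> M \<and> e \<in> {a, b, c})"
    using assms(1) by blast
  then have "(\<exists>!e. e \<in> M \<and> v \<in> e) \<longleftrightarrow> (\<exists>!e. e \<in> M \<and> e \<in> {a, b, c})"
    by simp
  also have "\<dots> \<longleftrightarrow> exactly_one (a \<in> M) (b \<in> M) (c \<in> M)"
    using assms(2-4) unfolding exactly_one_def by blast
  finally show ?thesis .
qed

lemma perfect_matching_para_iff:
  assumes "1 \<le> q"
  shows "perfect_matching (para_verts p q) (para_edges p q) M \<longleftrightarrow> M \<subseteq> para_edges p q \<and>
    (\<forall>y r. is_vertex p q y r \<longrightarrow> exactly_one (hedge y (r - 1) \<in> M) (hedge y r \<in> M) (vedge_at y r \<in> M))"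
proof (cases "M \<subseteq> para_edges p q")
  case True
  have at_vertex: "(\<exists>!e. e \<in> M \<and> (y - 1 + r, y) \<in> e) \<longleftrightarrow>
      exactly_one (hedge y (r - 1) \<in> M) (hedge y r \<in> M) (vedge_at y r \<in> M)" for y r
    by (rule ex1_mem_iff_exactly_one) (use True edges_at_vertex in auto)
  have "(\<forall>v \<in> para_verts p q. \<exists>!e. e \<in> M \<and> v \<in> e) \<longleftrightarrow>
      (\<forall>y r. is_vertex p q y r \<longrightarrow> exactly_one (hedge y (r - 1) \<in> M) (hedge y r \<in> M) (vedge_at y r \<in> M))"
  proof (intro iffI allI impI ballI)
    fix y r assume "\<forall>v \<in> para_verts p q. \<exists>!e. e \<in> M \<and> v \<in> e" "is_vertex p q y r"
    then show "exactly_one (hedge y (r - 1) \<in> M) (hedge y r \<in> M) (vedge_at y r \<in> M)"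
      using at_vertex vertex_in_para_verts_iff[OF assms] by blast
  next
    fix v assume H: "\<forall>y r. is_vertex p q y r \<longrightarrow>
      exactly_one (hedge y (r - 1) \<in> M) (hedge y r \<in> M) (vedge_at y r \<in> M)" and "v \<in> para_verts p q"
    obtain x y where v: "v = (x, y)" by (cases v)
    have "(y - 1 + (x - y + 1), y) \<in> para_verts p q" using \<open>v \<in> para_verts p q\<close> v by simp
    then have "is_vertex p q y (x - y + 1)" by (rule vertex_in_para_verts_iff[OF assms, THEN iffD1])
    then have "\<exists>!e. e \<in> M \<and> (y - 1 + (x - y + 1), y) \<in> e" using H at_vertex by blast
    then show "\<exists>!e. e \<in> M \<and> v \<in> e" using v by simp
  qed
  then show ?thesis unfolding perfect_matching_def using True by simp
qed (simp add: perfect_matching_def)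

lemma hedge_in_perfect_matching:
  "perfect_matching (para_verts p q) (para_edges p q) M \<Longrightarrow> hedge y r \<in> M \<Longrightarrow> is_hedge p q y r"
  using hedge_in_para_edges_iff unfolding perfect_matching_def by blast

lemma vedge_in_perfect_matching:
  "1 \<le> q \<Longrightarrow> perfect_matching (para_verts p q) (para_edges p q) M \<Longrightarrow> vedge i k \<in> M \<Longrightarrow>
    0 \<le> i \<and> i < int p \<and> 0 \<le> k \<and> k \<le> int q"
  using vedge_in_para_edges_iff unfolding perfect_matching_def by blast

section \<open>Perfect matchings are cut matchings\<close>

(* The matched horizontal edges of a level whose matched vertical edges sit at positions 2a
   (below) and 2b + 1 (above). *)
definition cut_hedge :: "int \<Rightarrow> int \<Rightarrow> int \<Rightarrow> bool" where
  "cut_hedge a b r \<longleftrightarrow> (if odd r then a \<le> r div 2 \<and> r div 2 < b else r div 2 < a \<or> b < r div 2)"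

definition monotone_cut :: "nat \<Rightarrow> nat \<Rightarrow> (int \<Rightarrow> int) \<Rightarrow> bool" where
  "monotone_cut p q C \<longleftrightarrow> mono C \<and> (\<forall>i < 0. C i = 0) \<and> (\<forall>i \<ge> int p. C i = int q)"

definition cut_matching :: "nat \<Rightarrow> nat \<Rightarrow> (int \<Rightarrow> int) \<Rightarrow> vtx set set" where
  "cut_matching p q C =
     {hedge y r |y r. is_hedge p q y r \<and> cut_hedge (C (y - 1)) (C y) r} \<union> {vedge i (C i) |i. 0 \<le> i \<and> i < int p}"

lemma cut_hedge_odd [simp]: "cut_hedge a b (2*m + 1) \<longleftrightarrow> a \<le> m \<and> m < b"
  unfolding cut_hedge_def by simp

lemma cut_hedge_even [simp]: "cut_hedge a b (2*m) \<longleftrightarrow> m < a \<or> b < m"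
  unfolding cut_hedge_def by simp

lemma cut_hedge_pred_even [simp]: "cut_hedge a b (2*m - 1) \<longleftrightarrow> a < m \<and> m \<le> b"
  using cut_hedge_odd[of a b "m - 1"] by auto

lemma cut_hedge_even_plus_two [simp]: "cut_hedge a b (2*m + 2) \<longleftrightarrow> m + 1 < a \<or> b < m + 1"
  using cut_hedge_even[of a b "m + 1"] by (simp add: algebra_simps)

lemma cut_hedge_exactly_one:
  assumes "is_vertex p q y r" "0 \<le> a" "a \<le> b" "b \<le> int q" "y \<le> 0 \<longrightarrow> a = 0" "int p \<le> y \<longrightarrow> b = int q"
  shows "exactly_one (is_hedge p q y (r - 1) \<and> cut_hedge a b (r - 1)) (is_hedge p q y r \<and> cut_hedge a b r)
    (if odd r then 0 \<le> y \<and> y < int p \<and> r div 2 = b else 1 \<le> y \<and> y \<le> int p \<and> r div 2 = a)"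
proof (cases "even r")
  case True
  then obtain n where r: "r = 2*n" by (rule evenE)
  have "is_hedge p q y (r - 1) \<and> cut_hedge a b (r - 1) \<longleftrightarrow> a < n \<and> n \<le> b"
    "is_hedge p q y r \<and> cut_hedge a b r \<longleftrightarrow> n < a \<or> b < n"
    "1 \<le> y \<and> y \<le> int p \<and> r div 2 = a \<longleftrightarrow> n = a"
    using assms unfolding r is_hedge_def is_vertex_def by auto
  then show ?thesis using True assms(3) unfolding exactly_one_def by auto
next
  case False
  then obtain n where r: "r = 2*n + 1" by (rule oddE)
  have r1: "r - 1 = 2*n" unfolding r by simp
  have "is_hedge p q y (r - 1) \<and> cut_hedge a b (r - 1) \<longleftrightarrow> n < a \<or> b < n"
    "is_hedge p q y r \<and> cut_hedge a b r \<longleftrightarrow> a \<le> n \<and> n < b"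
    "0 \<le> y \<and> y < int p \<and> r div 2 = b \<longleftrightarrow> n = b"
    using assms unfolding r1 unfolding r is_hedge_def is_vertex_def by auto
  then show ?thesis using False assms(3) unfolding exactly_one_def by auto
qed

lemma monotone_cut_bounds:
  assumes "monotone_cut p q C"
  shows "0 \<le> C i" "C i \<le> int q"
proof -
  have "mono C" "C (min i (-1)) = 0" "C (max i (int p)) = int q"
    using assms unfolding monotone_cut_def by auto
  then show "0 \<le> C i" "C i \<le> int q" by (metis max.cobounded1 min.cobounded1 monoD)+
qed

lemma hedge_in_cut_matching_iff [simp]:
  "hedge y r \<in> cut_matching p q C \<longleftrightarrow> is_hedge p q y r \<and> cut_hedge (C (y - 1)) (C y) r"
  unfolding cut_matching_def by auto

lemma vedge_in_cut_matching_iff [simp]: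
  "vedge i k \<in> cut_matching p q C \<longleftrightarrow> 0 \<le> i \<and> i < int p \<and> k = C i"
  unfolding cut_matching_def by auto

lemma cut_matching_perfect:
  assumes "1 \<le> q" and C: "monotone_cut p q C"
  shows "perfect_matching (para_verts p q) (para_edges p q) (cut_matching p q C)"
  unfolding perfect_matching_para_iff[OF assms(1)]
proof (intro conjI allI impI)
  show "cut_matching p q C \<subseteq> para_edges p q"
    using monotone_cut_bounds[OF C] unfolding cut_matching_def
    by (auto simp: hedge_in_para_edges_iff vedge_in_para_edges_iff[OF assms(1)])
  fix y r assume "is_vertex p q y r"
  moreover have "0 \<le> C (y - 1)" "C (y - 1) \<le> C y" "C y \<le> int q"
    using C monotone_cut_bounds[OF C] monoD[of C "y - 1" y] unfolding monotone_cut_def by auto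
  moreover have "y \<le> 0 \<longrightarrow> C (y - 1) = 0" "int p \<le> y \<longrightarrow> C y = int q"
    using C unfolding monotone_cut_def by auto
  moreover have "vedge_at y r \<in> cut_matching p q C \<longleftrightarrow> (if odd r then 0 \<le> y \<and> y < int p \<and> r div 2 = C y
      else 1 \<le> y \<and> y \<le> int p \<and> r div 2 = C (y - 1))"
    by (auto simp: vedge_at_def)
  ultimately show "exactly_one (hedge y (r - 1) \<in> cut_matching p q C) (hedge y r \<in> cut_matching p q C)
    (vedge_at y r \<in> cut_matching p q C)"
    using cut_hedge_exactly_one[of p q y r "C (y - 1)" "C y"] by simp
qed

(* A level is a path.  Below, s t says that the horizontal edge from position t to t + 1 is
   matched and x t that position t is matched vertically (a mark); a perfect matching satisfies
   exactly_one (s (t - 1)) (s t) (x t) at every vertex, so s alternates between marks. *)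

lemma alternating_run:
  fixes s x :: "int \<Rightarrow> bool"
  assumes "\<not> s l"
    and "\<And>t. l < t \<Longrightarrow> t \<le> h \<Longrightarrow> exactly_one (s (t - 1)) (s t) (x t)"
    and "\<And>t. l < t \<Longrightarrow> t \<le> h \<Longrightarrow> \<not> x t"
    and "l \<le> t" "t \<le> h"
  shows "s t \<longleftrightarrow> odd (t - l)"
  using assms(4,5)
proof (induction t rule: int_ge_induct)
  case base
  then show ?case using assms(1) by simp
next
  case (step t)
  have "exactly_one (s t) (s (t + 1)) (x (t + 1))" "\<not> x (t + 1)"
    using assms(2,3)[of "t + 1"] step.hyps step.prems by simp_all
  then show ?case using step by (auto simp: exactly_one_def)
qed

lemma first_mark_parity:
  fixes s x :: "int \<Rightarrow> bool"
  assumes "\<not> s l" "l < m" "x m"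
    and "\<And>t. l < t \<Longrightarrow> t \<le> m \<Longrightarrow> exactly_one (s (t - 1)) (s t) (x t)"
    and "\<And>t. l < t \<Longrightarrow> t < m \<Longrightarrow> \<not> x t"
  shows "odd (m - l)"
proof -
  have "s (m - 1) \<longleftrightarrow> odd (m - 1 - l)"
  proof (rule alternating_run[where s=s and x=x and h="m - 1"])
    show "exactly_one (s (t - 1)) (s t) (x t)" if "l < t" "t \<le> m - 1" for t
      using assms(4) that by simp
    show "\<not> x t" if "l < t" "t \<le> m - 1" for t
      using assms(5) that by simp
  qed (use assms(1,2) in auto)
  moreover have "\<not> s (m - 1)" using assms(3) assms(4)[of m] assms(2) by (simp add: exactly_one_def)
  ultimately show ?thesis by simp
qed

lemma first_mark_exists:
  fixes x :: "int \<Rightarrow> bool"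
  assumes "l < h" "x h"
  obtains m where "l < m" "m \<le> h" "x m" "\<And>t. l < t \<Longrightarrow> t < m \<Longrightarrow> \<not> x t"
proof -
  let ?A = "{t. l < t \<and> t \<le> h \<and> x t}"
  have "finite ?A" by (rule finite_subset[of _ "{l<..h}"]) auto
  moreover have "h \<in> ?A" using assms by simp
  ultimately have "Min ?A \<in> ?A" "\<And>t. t \<in> ?A \<Longrightarrow> Min ?A \<le> t" using Min_in Min_le by blast+
  then show ?thesis using that[of "Min ?A"] by fastforce
qed

lemma no_mark_before:
  fixes s x :: "int \<Rightarrow> bool"
  assumes "\<not> s l" "l < h" "x h"
    and "\<And>t. l < t \<Longrightarrow> t \<le> h \<Longrightarrow> exactly_one (s (t - 1)) (s t) (x t)"
    and "\<And>t. l < t \<Longrightarrow> t < h \<Longrightarrow> x t \<Longrightarrow> even (t - l)"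
    and "l < t" "t < h"
  shows "\<not> x t"
proof -
  obtain m where m: "l < m" "m \<le> h" "x m" "\<And>t. l < t \<Longrightarrow> t < m \<Longrightarrow> \<not> x t"
    using assms(2,3) by (rule first_mark_exists) blast
  have "odd (m - l)" by (rule first_mark_parity[where s=s and x=x]) (use assms m in auto)
  then have "m = h" using assms(5) m by fastforce
  then show ?thesis using m(4) assms(6,7) by blast
qed

lemma unique_mark:
  fixes s x :: "int \<Rightarrow> bool"
  assumes "\<not> s l" "\<not> s h" "l \<le> h" "odd (h - l)"
    and ex1: "\<And>t. l < t \<Longrightarrow> t \<le> h \<Longrightarrow> exactly_one (s (t - 1)) (s t) (x t)"
    and odd_marks: "\<And>t. l < t \<Longrightarrow> t \<le> h \<Longrightarrow> x t \<Longrightarrow> odd (t - l)"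
  shows "\<exists>!u. l < u \<and> u \<le> h \<and> x u"
proof -
  have two_marks: False if uv: "l < u" "u < v" "v \<le> h" "x u" "x v" for u v
  proof -
    obtain m where m: "u < m" "m \<le> v" "x m" "\<And>t. u < t \<Longrightarrow> t < m \<Longrightarrow> \<not> x t"
      using uv(2,5) by (rule first_mark_exists) blast
    have "\<not> s u" using ex1[of u] uv by (simp add: exactly_one_def)
    then have "odd (m - u)" by (rule first_mark_parity[where s=s and x=x]) (use uv ex1 m in auto)
    moreover have "odd (m - l)" "odd (u - l)" using odd_marks m uv by auto
    ultimately show False by presburger
  qed
  have "\<exists>u. l < u \<and> u \<le> h \<and> x u"
  proof (rule ccontr)
    assume "\<nexists>u. l < u \<and> u \<le> h \<and> x u"
    then have "s h \<longleftrightarrow> odd (h - l)" by (intro alternating_run[where s=s and x=x and h=h]) (use assms in auto)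
    then show False using assms(2,4) by simp
  qed
  then show ?thesis using two_marks by (metis linorder_neqE_linordered_idom)
qed

(* For y = 0 there is no matched vertical edge below level y, and a = 0 is a dummy. *)
context
  fixes p q :: nat and M :: "vtx set set" and y a :: int
  assumes q: "1 \<le> q" and M: "perfect_matching (para_verts p q) (para_edges p q) M"
    and y: "0 \<le> y" "y < int p" and a: "0 \<le> a" "a \<le> int q" "y = 0 \<Longrightarrow> a = 0"
    and below: "\<And>k. vedge (y - 1) k \<in> M \<longleftrightarrow> 1 \<le> y \<and> k = a"
begin

lemma level_exactly_one:
  "is_vertex p q y t \<Longrightarrow> exactly_one (hedge y (t - 1) \<in> M) (hedge y t \<in> M) (vedge_at y t \<in> M)"
  using M unfolding perfect_matching_para_iff[OF q] by blast

lemma level_odd_mark: "vedge_at y t \<in> M \<Longrightarrow> t \<noteq> 2*a \<Longrightarrow> odd t"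
  using below by (metis evenE vedge_at_even)

lemma level_no_mark_left:
  assumes "0 \<le> t" "t < 2*a"
  shows "vedge_at y t \<notin> M"
proof -
  have "1 \<le> y" using assms a(3) y by fastforce
  show ?thesis
  proof (rule no_mark_before[where s = "\<lambda>t. hedge y t \<in> M" and l = "-1" and h = "2*a"])
    show "hedge y (-1) \<notin> M" using hedge_in_perfect_matching[OF M, of y "-1"] unfolding is_hedge_def by auto
    show "vedge_at y (2*a) \<in> M" using below \<open>1 \<le> y\<close> by simp
    show "exactly_one (hedge y (t - 1) \<in> M) (hedge y t \<in> M) (vedge_at y t \<in> M)" if "-1 < t" "t \<le> 2*a" for t
      using level_exactly_one that \<open>1 \<le> y\<close> y a unfolding is_vertex_def by auto
    show "even (t - -1)" if "-1 < t" "t < 2*a" "vedge_at y t \<in> M" for t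
      using level_odd_mark[of t] that by simp
  qed (use assms a in auto)
qed

lemma level_unique_mark_right: "\<exists>!u. 2*a < u \<and> u \<le> 2 * int q + 1 \<and> vedge_at y u \<in> M"
proof (rule unique_mark[where s = "\<lambda>t. hedge y t \<in> M"])
  show "hedge y (2*a) \<notin> M"
  proof (cases "y = 0")
    case True
    then show ?thesis using hedge_in_perfect_matching[OF M, of y "2*a"] a(3) unfolding is_hedge_def by auto
  next
    case False
    then have "vedge_at y (2*a) \<in> M" "is_vertex p q y (2*a)" using below y a unfolding is_vertex_def by auto
    then show ?thesis using level_exactly_one[of "2*a"] by (simp add: exactly_one_def)
  qed
  show "hedge y (2 * int q + 1) \<notin> M"
    using hedge_in_perfect_matching[OF M, of y "2 * int q + 1"] unfolding is_hedge_def by auto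
qed (use a y level_exactly_one level_odd_mark in \<open>auto simp: is_vertex_def\<close>)

lemma vedge_unique_in_level: "\<exists>b. a \<le> b \<and> b \<le> int q \<and> (\<forall>k. vedge y k \<in> M \<longleftrightarrow> k = b)"
proof -
  obtain u where u: "2*a < u" "u \<le> 2 * int q + 1" "vedge_at y u \<in> M"
    and u_unique: "\<And>t. 2*a < t \<Longrightarrow> t \<le> 2 * int q + 1 \<Longrightarrow> vedge_at y t \<in> M \<Longrightarrow> t = u"
    using level_unique_mark_right by blast
  obtain b where b: "u = 2*b + 1" using level_odd_mark[OF u(3)] u(1) by (metis oddE less_irrefl)
  have "vedge y k \<in> M \<longleftrightarrow> k = b" for k
  proof
    assume k: "vedge y k \<in> M"
    then have "0 \<le> k" "k \<le> int q" using vedge_in_perfect_matching[OF q M] by blast+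
    moreover have "2*k + 1 \<noteq> 2*a" by presburger
    ultimately have "2*a < 2*k + 1" using level_no_mark_left[of "2*k + 1"] k by fastforce
    then show "k = b" using u_unique[of "2*k + 1"] k \<open>k \<le> int q\<close> b by simp
  qed (use u b in simp)
  then show ?thesis using u b by auto
qed

end

lemma mono_int_stepI:
  fixes f :: "int \<Rightarrow> 'a::order"
  assumes "\<And>i. f i \<le> f (i + 1)"
  shows "mono f"
proof (rule monoI)
  fix i j :: int assume "i \<le> j"
  then show "f i \<le> f j"
  proof (induction j rule: int_ge_induct)
    case (step j)
    then show ?case using assms[of j] by (blast intro: order_trans)
  qed simp
qed

definition cut_of :: "nat \<Rightarrow> nat \<Rightarrow> vtx set set \<Rightarrow> int \<Rightarrow> int" where
  "cut_of p q M i = (if i < 0 then 0 else if int p \<le> i then int q else THE k. vedge i k \<in> M)"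

lemma cut_of_level:
  assumes q: "1 \<le> q" and M: "perfect_matching (para_verts p q) (para_edges p q) M" and "n < p"
  shows "(\<forall>k. vedge (int n) k \<in> M \<longleftrightarrow> k = cut_of p q M (int n)) \<and> 0 \<le> cut_of p q M (int n - 1) \<and>
    cut_of p q M (int n - 1) \<le> cut_of p q M (int n) \<and> cut_of p q M (int n) \<le> int q"
  using \<open>n < p\<close>
proof (induction n)
  case 0
  have "\<exists>b. 0 \<le> b \<and> b \<le> int q \<and> (\<forall>k. vedge 0 k \<in> M \<longleftrightarrow> k = b)"
    by (rule vedge_unique_in_level[OF q M]) (use 0 vedge_in_perfect_matching[OF q M, of "-1"] in auto)
  then show ?case using 0 unfolding cut_of_def by (auto intro: the_equality)
next
  case (Suc n)
  then have IH: "\<forall>k. vedge (int n) k \<in> M \<longleftrightarrow> k = cut_of p q M (int n)"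
    "0 \<le> cut_of p q M (int n)" "cut_of p q M (int n) \<le> int q" by auto
  have "\<exists>b. cut_of p q M (int n) \<le> b \<and> b \<le> int q \<and> (\<forall>k. vedge (int (Suc n)) k \<in> M \<longleftrightarrow> k = b)"
    by (rule vedge_unique_in_level[OF q M]) (use Suc.prems IH in auto)
  then show ?case using Suc.prems IH(2) unfolding cut_of_def by (auto intro: the_equality)
qed

lemma monotone_cut_of:
  assumes q: "1 \<le> q" and M: "perfect_matching (para_verts p q) (para_edges p q) M"
  shows "monotone_cut p q (cut_of p q M)"
proof -
  note level = cut_of_level[OF q M]
  have bounds: "0 \<le> cut_of p q M i \<and> cut_of p q M i \<le> int q" for i
  proof (cases "0 \<le> i \<and> i < int p")
    case True
    then show ?thesis using level[of "nat i"] by (simp add: nat_less_iff)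
  qed (auto simp: cut_of_def)
  have "cut_of p q M i \<le> cut_of p q M (i + 1)" for i
  proof -
    consider "i + 1 < 0" | "int p \<le> i + 1" | "0 \<le> i + 1" "i + 1 < int p" by linarith
    then show ?thesis
    proof cases
      case 2
      then show ?thesis using bounds[of i] by (simp add: cut_of_def)
    next
      case 3
      then show ?thesis using level[of "nat (i + 1)"] by (simp add: nat_less_iff)
    qed (simp add: cut_of_def)
  qed
  then show ?thesis unfolding monotone_cut_def by (auto intro: mono_int_stepI simp: cut_of_def)
qed

lemma vedge_in_perfect_matching_iff:
  assumes q: "1 \<le> q" and M: "perfect_matching (para_verts p q) (para_edges p q) M"
  shows "vedge i k \<in> M \<longleftrightarrow> 0 \<le> i \<and> i < int p \<and> k = cut_of p q M i"
proof (cases "0 \<le> i \<and> i < int p")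
  case True
  then show ?thesis using cut_of_level[OF q M, of "nat i"] by (simp add: nat_less_iff)
qed (use vedge_in_perfect_matching[OF q M] in blast)

(* Along a level, the matched horizontal edges are determined from left to right by the
   vertical ones. *)
lemma perfect_matching_hedges_eq:
  assumes q: "1 \<le> q"
    and M: "perfect_matching (para_verts p q) (para_edges p q) M"
    and M': "perfect_matching (para_verts p q) (para_edges p q) M'"
    and same_vedges: "\<And>i k. vedge i k \<in> M \<longleftrightarrow> vedge i k \<in> M'"
  shows "hedge y r \<in> M \<longleftrightarrow> hedge y r \<in> M'"
proof (cases "-1 \<le> r")
  case True
  then show ?thesis
  proof (induction r rule: int_ge_induct)
    case base
    show ?case using hedge_in_perfect_matching[OF M, of y "-1"] hedge_in_perfect_matching[OF M', of y "-1"]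
      unfolding is_hedge_def by auto
  next
    case (step r)
    show ?case
    proof (cases "is_vertex p q y (r + 1)")
      case True
      have "vedge_at y (r + 1) \<in> M \<longleftrightarrow> vedge_at y (r + 1) \<in> M'"
        unfolding vedge_at_def using same_vedges by simp
      moreover have "exactly_one (hedge y r \<in> M) (hedge y (r + 1) \<in> M) (vedge_at y (r + 1) \<in> M)"
        and "exactly_one (hedge y r \<in> M') (hedge y (r + 1) \<in> M') (vedge_at y (r + 1) \<in> M')"
        using True M M' unfolding perfect_matching_para_iff[OF q] by (metis add_diff_cancel_right')+
      ultimately show ?thesis using step.IH unfolding exactly_one_def by blast
    next
      case False
      have "(y - 1 + (r + 1), y) \<in> hedge y (r + 1)" by (simp add: hedge_def)
      then have "hedge y (r + 1) \<notin> para_edges p q"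
        using False vertex_in_para_verts_iff[OF q] unfolding para_verts_def by blast
      then show ?thesis using M M' unfolding perfect_matching_def by blast
    qed
  qed
next
  case False
  then show ?thesis using hedge_in_perfect_matching[OF M, of y r] hedge_in_perfect_matching[OF M', of y r]
    unfolding is_hedge_def by auto
qed

theorem perfect_matching_eq_cut_matching:
  assumes q: "1 \<le> q" and M: "perfect_matching (para_verts p q) (para_edges p q) M"
  shows "M = cut_matching p q (cut_of p q M)"
proof -
  let ?M' = "cut_matching p q (cut_of p q M)"
  have M': "perfect_matching (para_verts p q) (para_edges p q) ?M'"
    by (rule cut_matching_perfect[OF q monotone_cut_of[OF q M]])
  have same_vedges: "vedge i k \<in> M \<longleftrightarrow> vedge i k \<in> ?M'" for i k
    by (simp add: vedge_in_perfect_matching_iff[OF q M])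
  show ?thesis
  proof (intro set_eqI iffI)
    fix e assume "e \<in> M"
    then show "e \<in> ?M'" using M perfect_matching_hedges_eq[OF q M M' same_vedges] same_vedges
      unfolding perfect_matching_def by (blast elim: para_edges_cases)
  next
    fix e assume "e \<in> ?M'"
    then show "e \<in> M" using M' perfect_matching_hedges_eq[OF q M M' same_vedges] same_vedges
      unfolding perfect_matching_def by (blast elim: para_edges_cases)
  qed
qed

section \<open>A complete forcing set of size pq + 1\<close>

lemma complete_forcing_set_iff:
  "complete_forcing_set V E S \<longleftrightarrow> S \<subseteq> E \<and>
    (\<forall>M M'. perfect_matching V E M \<longrightarrow> perfect_matching V E M' \<longrightarrow> M' \<noteq> M \<longrightarrow> (\<exists>e\<in>S. e \<in> M \<and> e \<notin> M'))"
  unfolding complete_forcing_set_def forcing_set_def by blast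

(* Cell (i, m) is hexagon m of row i; rows -1 and p are virtual.  step_edge u v is the edge
   shared by adjacent cells.  A left or down step crosses an edge of cut_matching p q C exactly when
   it enters the region left of the cut, an up-right step exactly when it stays on one side. *)

definition left_of_cut :: "(int \<Rightarrow> int) \<Rightarrow> int \<times> int \<Rightarrow> bool" where
  "left_of_cut C c \<longleftrightarrow> snd c < C (fst c)"

definition up_right :: "int \<times> int \<Rightarrow> int \<times> int" where
  "up_right c = (fst c - 1, snd c + 1)"

definition walk_step :: "nat \<Rightarrow> nat \<Rightarrow> int \<times> int \<Rightarrow> int \<times> int \<Rightarrow> bool" where
  "walk_step p q u v \<longleftrightarrow>
     (v = (fst u, snd u - 1) \<and> 0 \<le> fst u \<and> fst u < int p \<and> 1 \<le> snd u \<and> snd u \<le> int q) \<or>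
     (v = (fst u + 1, snd u) \<and> -1 \<le> fst u \<and> fst u < int p \<and> 0 \<le> snd u \<and> snd u < int q) \<or>
     (v = up_right u \<and> 1 \<le> fst u \<and> fst u < int p \<and> 0 \<le> snd u \<and> snd u + 1 < int q)"

definition step_edge :: "int \<times> int \<Rightarrow> int \<times> int \<Rightarrow> vtx set" where
  "step_edge u v = (if v = (fst u, snd u - 1) then vedge (fst u) (snd u)
     else if v = (fst u + 1, snd u) then hedge (fst u + 1) (2 * snd u + 1)
     else hedge (fst u) (2 * snd u + 2))"

definition crosses :: "(int \<times> int \<Rightarrow> bool) \<Rightarrow> int \<times> int \<Rightarrow> int \<times> int \<Rightarrow> bool" where
  "crosses X u v \<longleftrightarrow> (if v = up_right u then X u = X v else \<not> X u \<and> X v)"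

lemma walk_step_cases:
  assumes "walk_step p q u v"
  obtains (left) i m where "u = (i, m)" "v = (i, m - 1)" "0 \<le> i" "i < int p" "1 \<le> m" "m \<le> int q"
    | (down) i m where "u = (i, m)" "v = (i + 1, m)" "-1 \<le> i" "i < int p" "0 \<le> m" "m < int q"
    | (up_right) i m where "u = (i, m)" "v = (i - 1, m + 1)" "1 \<le> i" "i < int p" "0 \<le> m" "m + 1 < int q"
  using assms unfolding walk_step_def up_right_def by (cases u) auto

lemma left_of_cut_step:
  assumes "mono C" "walk_step p q u v"
  shows "if v = up_right u then left_of_cut C v \<longrightarrow> left_of_cut C u else left_of_cut C u \<longrightarrow> left_of_cut C v"
  using assms(2)
proof (cases rule: walk_step_cases)
  case (down i m)
  then show ?thesis using monoD[OF assms(1), of i "i + 1"] by (simp add: left_of_cut_def up_right_def)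
next
  case (up_right i m)
  then show ?thesis using monoD[OF assms(1), of "i - 1" i] by (simp add: left_of_cut_def up_right_def)
qed (simp add: left_of_cut_def up_right_def)

lemma step_edge_in_para_edges:
  assumes "1 \<le> p" "1 \<le> q" "walk_step p q u v"
  shows "step_edge u v \<in> para_edges p q"
  using assms(3)
proof (cases rule: walk_step_cases)
  case (left i m)
  then show ?thesis by (simp add: step_edge_def vedge_in_para_edges_iff[OF assms(2)])
next
  case (down i m)
  then show ?thesis using assms(1) by (simp add: step_edge_def hedge_in_para_edges_iff is_hedge_def) linarith
next
  case (up_right i m)
  then show ?thesis by (simp add: step_edge_def hedge_in_para_edges_iff is_hedge_def)
qed

lemma step_edge_in_cut_matching_iff:
  assumes "1 \<le> p" "monotone_cut p q C" "walk_step p q u v"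
  shows "step_edge u v \<in> cut_matching p q C \<longleftrightarrow> crosses (left_of_cut C) u v"
  using assms(3)
proof (cases rule: walk_step_cases)
  case (left i m)
  then show ?thesis by (auto simp: step_edge_def crosses_def left_of_cut_def up_right_def)
next
  case (down i m)
  then show ?thesis using assms(1)
    by (auto simp: step_edge_def crosses_def left_of_cut_def up_right_def is_hedge_def)
next
  case (up_right i m)
  have "C (i - 1) \<le> C i" using assms(2) unfolding monotone_cut_def by (simp add: monoD)
  then show ?thesis using up_right
    by (auto simp: step_edge_def crosses_def left_of_cut_def up_right_def is_hedge_def)
qed

lemma step_separation:
  fixes C C' :: "int \<Rightarrow> int"
  defines "X \<equiv> left_of_cut C" and "Y \<equiv> left_of_cut C'"
  assumes "mono C" "mono C'" "walk_step p q a b"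
  shows "X a \<noteq> Y a \<Longrightarrow> X b \<noteq> Y b \<Longrightarrow> X a = X b"
    and "X a = Y a \<Longrightarrow> X b \<noteq> Y b \<Longrightarrow> X b \<Longrightarrow> crosses X a b \<and> \<not> crosses Y a b"
    and "X a \<noteq> Y a \<Longrightarrow> \<not> X a \<Longrightarrow> X b = Y b \<Longrightarrow> crosses X a b \<and> \<not> crosses Y a b"
  using left_of_cut_step[OF assms(3,5)] left_of_cut_step[OF assms(4,5)]
  unfolding X_def Y_def crosses_def by (auto split: if_splits)

(* Invariant: either the walk is still to meet a cell where the two regions differ, or it is
   inside such a difference region on its side where X is false. *)
lemma walk_separates:
  fixes C C' :: "int \<Rightarrow> int"
  defines "X \<equiv> left_of_cut C" and "Y \<equiv> left_of_cut C'"
  assumes C: "mono C" and C': "mono C'"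
  shows "successively (walk_step p q) (u # ws) \<Longrightarrow> X (last (u # ws)) = Y (last (u # ws)) \<Longrightarrow>
    (X u = Y u \<Longrightarrow> \<exists>w\<in>set ws. X w \<noteq> Y w) \<Longrightarrow> (X u \<noteq> Y u \<Longrightarrow> \<not> X u) \<Longrightarrow>
    \<exists>(a, b)\<in>set (zip (u # ws) ws). crosses X a b \<and> \<not> crosses Y a b"
proof (induction ws arbitrary: u)
  case Nil
  then show ?case by auto
next
  case (Cons v ws)
  have step: "walk_step p q u v" and walk: "successively (walk_step p q) (v # ws)"
    using Cons.prems(1) by auto
  note sep = step_separation[OF C C' step, folded X_def Y_def]
  have IH: "\<exists>(a, b)\<in>set (zip (u # v # ws) (v # ws)). crosses X a b \<and> \<not> crosses Y a b"
    if "X v = Y v \<Longrightarrow> \<exists>w\<in>set ws. X w \<noteq> Y w" "X v \<noteq> Y v \<Longrightarrow> \<not> X v"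
    using Cons.IH[OF walk _ that] Cons.prems(2) by auto
  consider "X u = Y u" "X v = Y v" | "X u = Y u" "X v \<noteq> Y v" | "X u \<noteq> Y u" "X v = Y v"
    | "X u \<noteq> Y u" "X v \<noteq> Y v" by blast
  then show ?case
  proof cases
    case 1
    then show ?thesis using IH Cons.prems(3) by auto
  next
    case 2
    then show ?thesis using IH sep(2) by (cases "X v") auto
  next
    case 3
    then show ?thesis using sep(3) Cons.prems(4) by auto
  next
    case 4
    then show ?thesis using IH sep(1) Cons.prems(4) by auto
  qed
qed

fun row_walk :: "int \<Rightarrow> nat \<Rightarrow> (int \<times> int) list" where
  "row_walk r 0 = []"
| "row_walk r (Suc m) = (r, int m) # row_walk r m"

fun zigzag :: "int \<Rightarrow> int \<Rightarrow> nat \<Rightarrow> (int \<times> int) list" where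
  "zigzag r k 0 = []"
| "zigzag r k (Suc n) = (r, k) # (r + 1, k) # zigzag r (k + 1) n"

lemma length_row_walk [simp]: "length (row_walk r m) = m"
  by (induction m) auto

lemma in_row_walk: "j < m \<Longrightarrow> (r, int j) \<in> set (row_walk r m)"
  by (induction m) (auto simp: less_Suc_eq)

lemma row_walk_hd_last: "0 < m \<Longrightarrow> row_walk r m \<noteq> [] \<and> hd (row_walk r m) = (r, int m - 1) \<and> last (row_walk r m) = (r, 0)"
proof (induction m)
  case (Suc m)
  then show ?case by (cases m) auto
qed simp

lemma row_walk_walk:
  assumes "0 \<le> r" "r < int p" "m \<le> q"
  shows "successively (walk_step p q) (row_walk r m)"
  using assms(3)
proof (induction m)
  case (Suc m)
  show ?case
  proof (cases m)
    case (Suc m')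
    then have "walk_step p q (r, int m) (hd (row_walk r m))"
      using row_walk_hd_last[of m r] Suc.prems assms unfolding walk_step_def by auto
    then show ?thesis using Suc.IH Suc.prems by (simp add: successively_Cons)
  qed simp
qed simp

lemma length_zigzag [simp]: "length (zigzag r k n) = 2 * n"
  by (induction n arbitrary: k) auto

lemma in_zigzag:
  "j < n \<Longrightarrow> (r, k + int j) \<in> set (zigzag r k n) \<and> (r + 1, k + int j) \<in> set (zigzag r k n)"
proof (induction n arbitrary: k j)
  case (Suc n)
  then show ?case using Suc.IH[of "j - 1" "k + 1"] by (cases j) (auto simp: algebra_simps)
qed simp

lemma zigzag_hd_last:
  "zigzag r k (Suc n) \<noteq> [] \<and> hd (zigzag r k (Suc n)) = (r, k) \<and> last (zigzag r k (Suc n)) = (r + 1, k + int n)"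
proof (induction n arbitrary: k)
  case (Suc n)
  then show ?case using Suc.IH[of "k + 1"] by (simp add: algebra_simps)
qed simp

lemma zigzag_walk:
  assumes "0 \<le> r" "r + 1 < int p" "0 \<le> k" "k + int n \<le> int q"
  shows "successively (walk_step p q) (zigzag r k n)"
  using assms(3,4)
proof (induction n arbitrary: k)
  case (Suc n)
  have "walk_step p q (r, k) (r + 1, k)" using Suc.prems assms unfolding walk_step_def by auto
  moreover have "walk_step p q (r + 1, k) (hd (zigzag r (k + 1) n))" if "n \<noteq> 0"
    using that zigzag_hd_last[of r "k + 1" "n - 1"] Suc.prems assms
    unfolding walk_step_def up_right_def by (cases n) auto
  moreover have "successively (walk_step p q) (zigzag r (k + 1) n)" using Suc.IH[of "k + 1"] Suc.prems by simp
  ultimately show ?case by (cases n) (auto simp: successively_Cons)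
qed simp

(* Since only left, down and up-right steps are available, single rows are traversed from right
   to left and pairs of rows by a zigzag from left to right, alternately.  snake b n r q covers
   rows r to r + n - 1, starting with a single row if b, and ends in row r + n; snake_fits b n
   says that the pattern works out. *)
fun snake :: "bool \<Rightarrow> nat \<Rightarrow> int \<Rightarrow> nat \<Rightarrow> (int \<times> int) list" where
  "snake b 0 r q = [(r, if b then int q - 1 else 0)]"
| "snake True (Suc n) r q = row_walk r q @ snake False n (r + 1) q"
| "snake False (Suc 0) r q = []"
| "snake False (Suc (Suc n)) r q = zigzag r 0 q @ snake True n (r + 2) q"

definition snake_fits :: "bool \<Rightarrow> nat \<Rightarrow> bool" where
  "snake_fits b n \<longleftrightarrow> (if b then n mod 3 \<noteq> 2 else n mod 3 \<noteq> 1)"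

lemma snake_fits_rec:
  "snake_fits True (Suc n) \<Longrightarrow> snake_fits False n"
  "snake_fits False (Suc (Suc n)) \<Longrightarrow> snake_fits True n"
  "\<not> snake_fits False (Suc 0)"
  unfolding snake_fits_def by presburger+

lemma snake_hd:
  assumes "1 \<le> q" "snake_fits b n"
  shows "snake b n r q \<noteq> [] \<and> hd (snake b n r q) = (r, if b then int q - 1 else 0)"
  using assms row_walk_hd_last[of q r] zigzag_hd_last[of r 0 "q - 1"] snake_fits_rec(3)
  by (cases "(b, n, r, q)" rule: snake.cases) simp_all

lemma length_snake: "snake_fits b n \<Longrightarrow> length (snake b n r q) = n * q + 1"
  by (induction b n r q rule: snake.induct) (auto dest: snake_fits_rec(1,2) simp: snake_fits_rec(3))

lemma fst_last_snake: "1 \<le> q \<Longrightarrow> snake_fits b n \<Longrightarrow> fst (last (snake b n r q)) = r + int n"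
proof (induction b n r q rule: snake.induct)
  case (2 n r q)
  then show ?case using snake_hd[of q False n "r + 1"] by (simp add: snake_fits_rec)
next
  case (4 n r q)
  then show ?case using snake_hd[of q True n "r + 2"] by (simp add: snake_fits_rec)
qed (simp_all add: snake_fits_rec)

lemma in_snake: "snake_fits b n \<Longrightarrow> i < n \<Longrightarrow> j < q \<Longrightarrow> (r + int i, int j) \<in> set (snake b n r q)"
proof (induction b n r q arbitrary: i rule: snake.induct)
  case (2 n r q)
  then show ?case using in_row_walk[of j q r] "2.IH"[of "i - 1"]
    by (cases i) (auto simp: snake_fits_rec algebra_simps)
next
  case (4 n r q)
  consider "i = 0" | "i = 1" | "2 \<le> i" by linarith
  then show ?case
  proof cases
    case 3
    then show ?thesis using 4 "4.IH"[of "i - 2"] by (simp add: snake_fits_rec of_nat_diff algebra_simps)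
  qed (use 4 in_zigzag[of j q r 0] in auto)
qed (simp_all add: snake_fits_rec)

lemma snake_walk:
  "1 \<le> q \<Longrightarrow> snake_fits b n \<Longrightarrow> 0 \<le> r \<Longrightarrow> r + int n \<le> int p \<Longrightarrow>
    successively (walk_step p q) (snake b n r q)"
proof (induction b n r q rule: snake.induct)
  case (2 n r q)
  have "walk_step p q (last (row_walk r q)) (hd (snake False n (r + 1) q))"
    using 2 row_walk_hd_last[of q r] snake_hd[of q False n "r + 1"]
    unfolding walk_step_def by (simp add: snake_fits_rec)
  then show ?case using 2 row_walk_walk[of r p q q]
    by (auto simp: successively_append_iff snake_fits_rec)
next
  case (4 n r q)
  have "walk_step p q (last (zigzag r 0 q)) (hd (snake True n (r + 2) q))"
    using 4 zigzag_hd_last[of r 0 "q - 1"] snake_hd[of q True n "r + 2"]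
    unfolding walk_step_def by (simp add: snake_fits_rec)
  then show ?case using 4 zigzag_walk[of r p 0 q q]
    by (auto simp: successively_append_iff snake_fits_rec)
qed simp_all

definition hex_walk :: "nat \<Rightarrow> nat \<Rightarrow> (int \<times> int) list" where
  "hex_walk p q = (-1, if p mod 3 \<noteq> 2 then int q - 1 else 0) # snake (p mod 3 \<noteq> 2) p 0 q"

lemma hex_walk_properties:
  assumes "1 \<le> p" "1 \<le> q"
  shows "successively (walk_step p q) (hex_walk p q)"
    and "length (hex_walk p q) = p * q + 2"
    and "fst (hd (hex_walk p q)) = -1"
    and "fst (last (hex_walk p q)) = int p"
    and "0 \<le> i \<Longrightarrow> i < int p \<Longrightarrow> 0 \<le> j \<Longrightarrow> j < int q \<Longrightarrow> (i, j) \<in> set (hex_walk p q)"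
proof -
  define b where "b = (p mod 3 \<noteq> 2)"
  have fits: "snake_fits b p" unfolding snake_fits_def b_def by presburger
  have walk: "hex_walk p q = (-1, if b then int q - 1 else 0) # snake b p 0 q"
    unfolding hex_walk_def b_def ..
  note hd = snake_hd[OF assms(2) fits, of 0]
  have "walk_step p q (-1, if b then int q - 1 else 0) (hd (snake b p 0 q))"
    using hd assms unfolding walk_step_def by auto
  then show "successively (walk_step p q) (hex_walk p q)"
    unfolding walk using hd snake_walk[OF assms(2) fits, of 0 p] by (simp add: successively_Cons)
  show "length (hex_walk p q) = p * q + 2" unfolding walk using length_snake[OF fits] by simp
  show "fst (hd (hex_walk p q)) = -1" unfolding walk by simp
  show "fst (last (hex_walk p q)) = int p" unfolding walk using hd fst_last_snake[OF assms(2) fits] by simp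
  assume "0 \<le> i" "i < int p" "0 \<le> j" "j < int q"
  then show "(i, j) \<in> set (hex_walk p q)"
    unfolding walk using in_snake[OF fits, of "nat i" "nat j" q 0] by simp
qed

lemma successively_zip_tl: "successively P xs \<Longrightarrow> (a, b) \<in> set (zip xs (tl xs)) \<Longrightarrow> P a b"
  by (induction xs rule: induct_list012) auto

definition walk_edges :: "(int \<times> int) list \<Rightarrow> vtx set set" where
  "walk_edges w = (\<lambda>(u, v). step_edge u v) ` set (zip w (tl w))"

lemma card_walk_edges: "card (walk_edges w) \<le> length w - 1"
proof -
  have "card (walk_edges w) \<le> card (set (zip w (tl w)))"
    unfolding walk_edges_def by (rule card_image_le) simp
  also have "\<dots> \<le> length w - 1" using card_length[of "zip w (tl w)"] by simp
  finally show ?thesis .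
qed

lemma left_of_cut_differs:
  assumes "monotone_cut p q C" "monotone_cut p q C'" "C \<noteq> C'"
  obtains i j where "0 \<le> i" "i < int p" "0 \<le> j" "j < int q" "left_of_cut C (i, j) \<noteq> left_of_cut C' (i, j)"
proof -
  obtain i where i: "C i \<noteq> C' i" using assms(3) by blast
  have "0 \<le> i"
  proof (rule ccontr)
    assume "\<not> 0 \<le> i"
    then show False using i assms(1,2) unfolding monotone_cut_def by simp
  qed
  moreover have "i < int p"
  proof (rule ccontr)
    assume "\<not> i < int p"
    then show False using i assms(1,2) unfolding monotone_cut_def by simp
  qed
  moreover have "0 \<le> min (C i) (C' i)" "min (C i) (C' i) < int q"
    using monotone_cut_bounds[OF assms(1), of i] monotone_cut_bounds[OF assms(2), of i] i by auto
  moreover have "left_of_cut C (i, min (C i) (C' i)) \<noteq> left_of_cut C' (i, min (C i) (C' i))"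
    using i unfolding left_of_cut_def by auto
  ultimately show ?thesis using that by blast
qed

lemma walk_edges_separate:
  assumes p: "1 \<le> p" and q: "1 \<le> q" and C: "monotone_cut p q C" and C': "monotone_cut p q C'"
    and "C \<noteq> C'"
  shows "\<exists>e\<in>walk_edges (hex_walk p q). e \<in> cut_matching p q C \<and> e \<notin> cut_matching p q C'"
proof -
  obtain u ws where w: "hex_walk p q = u # ws" unfolding hex_walk_def by simp
  obtain i j where ij: "0 \<le> i" "i < int p" "0 \<le> j" "j < int q"
    and differs: "left_of_cut C (i, j) \<noteq> left_of_cut C' (i, j)"
    using left_of_cut_differs[OF C C' \<open>C \<noteq> C'\<close>] by blast
  have ends: "C (fst u) = C' (fst u)" "C (fst (last (u # ws))) = C' (fst (last (u # ws)))"
    using hex_walk_properties[OF p q] C C' unfolding w monotone_cut_def by auto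
  have "\<exists>(a, b)\<in>set (zip (u # ws) ws). crosses (left_of_cut C) a b \<and> \<not> crosses (left_of_cut C') a b"
  proof (rule walk_separates)
    show "mono C" "mono C'" using C C' unfolding monotone_cut_def by auto
    show "successively (walk_step p q) (u # ws)" using hex_walk_properties(1)[OF p q] unfolding w .
    show "left_of_cut C (last (u # ws)) = left_of_cut C' (last (u # ws))"
      using ends(2) unfolding left_of_cut_def by simp
    show "left_of_cut C u \<noteq> left_of_cut C' u \<Longrightarrow> \<not> left_of_cut C u"
      using ends(1) unfolding left_of_cut_def by simp
    have "(i, j) \<in> set (u # ws)" using hex_walk_properties(5)[OF p q ij] unfolding w .
    moreover have "fst u = -1" using hex_walk_properties(3)[OF p q] unfolding w by simp
    ultimately have "(i, j) \<in> set ws" using ij(1) by auto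
    then show "\<exists>w\<in>set ws. left_of_cut C w \<noteq> left_of_cut C' w" using differs by blast
  qed
  then obtain a b where ab: "(a, b) \<in> set (zip (u # ws) ws)"
    "crosses (left_of_cut C) a b" "\<not> crosses (left_of_cut C') a b" by blast
  have "walk_step p q a b"
    using successively_zip_tl[OF hex_walk_properties(1)[OF p q]] ab(1) unfolding w by simp
  then have "step_edge a b \<in> cut_matching p q C" "step_edge a b \<notin> cut_matching p q C'"
    using ab(2,3) step_edge_in_cut_matching_iff[OF p C] step_edge_in_cut_matching_iff[OF p C'] by auto
  moreover have "step_edge a b \<in> walk_edges (hex_walk p q)"
    unfolding walk_edges_def w by (rule image_eqI[where x = "(a, b)"]) (use ab(1) in simp_all)
  ultimately show ?thesis by blast
qed

theorem complete_forcing_set_walk_edges: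
  assumes p: "1 \<le> p" and q: "1 \<le> q"
  shows "complete_forcing_set (para_verts p q) (para_edges p q) (walk_edges (hex_walk p q))"
  unfolding complete_forcing_set_iff
proof (intro conjI allI impI)
  show "walk_edges (hex_walk p q) \<subseteq> para_edges p q"
  proof
    fix e assume "e \<in> walk_edges (hex_walk p q)"
    then obtain a b where "(a, b) \<in> set (zip (hex_walk p q) (tl (hex_walk p q)))" "e = step_edge a b"
      unfolding walk_edges_def by auto
    then show "e \<in> para_edges p q"
      using successively_zip_tl[OF hex_walk_properties(1)[OF p q]] step_edge_in_para_edges[OF p q] by blast
  qed
  fix M M' assume M: "perfect_matching (para_verts p q) (para_edges p q) M"
    and M': "perfect_matching (para_verts p q) (para_edges p q) M'" and "M' \<noteq> M"
  let ?C = "cut_of p q M" and ?C' = "cut_of p q M'"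
  have "?C \<noteq> ?C'"
    using \<open>M' \<noteq> M\<close> perfect_matching_eq_cut_matching[OF q M] perfect_matching_eq_cut_matching[OF q M'] by metis
  then show "\<exists>e\<in>walk_edges (hex_walk p q). e \<in> M \<and> e \<notin> M'"
    using walk_edges_separate[OF p q monotone_cut_of[OF q M] monotone_cut_of[OF q M']]
      perfect_matching_eq_cut_matching[OF q M] perfect_matching_eq_cut_matching[OF q M'] by simp
qed

lemma card_walk_edges_hex_walk: "1 \<le> p \<Longrightarrow> 1 \<le> q \<Longrightarrow> card (walk_edges (hex_walk p q)) \<le> p * q + 1"
  using card_walk_edges[of "hex_walk p q"] hex_walk_properties(2)[of p q] by simp

section \<open>The lower bound\<close>

lemma complete_forcing_set_hits_difference:
  assumes "complete_forcing_set V E S" "perfect_matching V E M" "perfect_matching V E M'" "e \<in> M" "e \<notin> M'"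
  shows "S \<inter> (M - M') \<noteq> {}"
proof -
  have "\<forall>M M'. perfect_matching V E M \<longrightarrow> perfect_matching V E M' \<longrightarrow> M' \<noteq> M \<longrightarrow> (\<exists>e\<in>S. e \<in> M \<and> e \<notin> M')"
    using assms(1) unfolding complete_forcing_set_iff by (rule conjunct2)
  moreover have "M' \<noteq> M" using assms(4,5) by blast
  ultimately show ?thesis using assms(2,3) by blast
qed

lemma card_le_if_hits_disjoint_family:
  assumes "finite S" and hits: "\<And>x. x \<in> I \<Longrightarrow> S \<inter> D x \<noteq> {}"
    and disjoint: "\<And>x y e. x \<in> I \<Longrightarrow> y \<in> I \<Longrightarrow> e \<in> D x \<Longrightarrow> e \<in> D y \<Longrightarrow> x = y"
  shows "card I \<le> card S"
proof -
  define h where "h x = (SOME e. e \<in> S \<inter> D x)" for x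
  have h: "h x \<in> S \<inter> D x" if "x \<in> I" for x
    using hits[OF that] unfolding h_def some_in_eq .
  have "inj_on h I"
  proof (rule inj_onI)
    fix x y assume xy: "x \<in> I" "y \<in> I" "h x = h y"
    then have "h x \<in> D x" "h x \<in> D y" using h[of x] h[of y] by auto
    then show "x = y" using disjoint xy(1,2) by blast
  qed
  moreover have "h ` I \<subseteq> S" using h by blast
  ultimately show ?thesis using card_inj_on_le assms(1) by blast
qed

(* The cuts hex_flip_cut p q i j 0 and hex_flip_cut p q i j 1 differ only in row i, by the
   hexagon (i, j); the difference of their matchings consists of edges of that hexagon. *)
definition hex_flip_cut :: "nat \<Rightarrow> nat \<Rightarrow> int \<Rightarrow> int \<Rightarrow> int \<Rightarrow> int \<Rightarrow> int" where
  "hex_flip_cut p q i j t k =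
     (if k < 0 then 0 else if int p \<le> k then int q else if k < i then j else if k = i then j + t else j + 1)"

definition flip_edges :: "int \<Rightarrow> int \<Rightarrow> vtx set set" where
  "flip_edges i j = {vedge i (j + 1), hedge i (2*j + 1), hedge (i + 1) (2*j)}"

definition low_cut :: "nat \<Rightarrow> nat \<Rightarrow> int \<Rightarrow> int" where
  "low_cut p q k = (if k < int p then 0 else int q)"

definition high_cut :: "nat \<Rightarrow> int \<Rightarrow> int" where
  "high_cut q k = (if k < 0 then 0 else int q)"

lemma monotone_hex_flip_cut:
  assumes "0 \<le> j" "j < int q" "0 \<le> t" "t \<le> 1"
  shows "monotone_cut p q (hex_flip_cut p q i j t)"
  using assms unfolding monotone_cut_def hex_flip_cut_def by (auto intro!: monoI)

lemma monotone_low_cut: "monotone_cut p q (low_cut p q)"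
  unfolding monotone_cut_def low_cut_def by (auto intro!: monoI)

lemma monotone_high_cut: "monotone_cut p q (high_cut q)"
  unfolding monotone_cut_def high_cut_def by (auto intro!: monoI)

lemma cut_hedge_raise_upper: "cut_hedge a (b + 1) r \<Longrightarrow> \<not> cut_hedge a b r \<Longrightarrow> r = 2*b + 1"
  by (cases "even r") (auto elim!: evenE oddE)

lemma cut_hedge_raise_lower: "cut_hedge (a + 1) b r \<Longrightarrow> \<not> cut_hedge a b r \<Longrightarrow> r = 2*a"
  by (cases "even r") (auto elim!: evenE oddE)

lemma hex_flip_difference:
  assumes "0 \<le> i" "i < int p" "0 \<le> j" "j < int q"
  shows "cut_matching p q (hex_flip_cut p q i j 1) - cut_matching p q (hex_flip_cut p q i j 0) \<subseteq> flip_edges i j"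
proof
  let ?A = "hex_flip_cut p q i j 1" and ?B = "hex_flip_cut p q i j 0"
  have same: "?A k = ?B k" if "k \<noteq> i" for k using that unfolding hex_flip_cut_def by simp
  have at_i: "?A i = ?B i + 1" "?B i = j" using assms unfolding hex_flip_cut_def by auto
  fix e assume e: "e \<in> cut_matching p q ?A - cut_matching p q ?B"
  then consider y r where "e = hedge y r" "cut_hedge (?A (y - 1)) (?A y) r" "\<not> cut_hedge (?B (y - 1)) (?B y) r"
    | k where "e = vedge k (?A k)" "?A k \<noteq> ?B k"
    unfolding cut_matching_def by auto
  then show "e \<in> flip_edges i j"
  proof cases
    case (1 y r)
    consider "y = i" | "y = i + 1" | "y \<noteq> i" "y - 1 \<noteq> i" by linarith
    then show ?thesis
    proof cases
      case 1
      then have "r = 2*j + 1" using cut_hedge_raise_upper \<open>cut_hedge _ _ r\<close> \<open>\<not> cut_hedge _ _ r\<close> same at_i by simp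
      then show ?thesis unfolding flip_edges_def using \<open>e = hedge y r\<close> 1 by simp
    next
      case 2
      then have "r = 2*j" using cut_hedge_raise_lower \<open>cut_hedge _ _ r\<close> \<open>\<not> cut_hedge _ _ r\<close> same at_i by simp
      then show ?thesis unfolding flip_edges_def using \<open>e = hedge y r\<close> 2 by simp
    next
      case 3
      then show ?thesis using \<open>cut_hedge _ _ r\<close> \<open>\<not> cut_hedge _ _ r\<close> same by simp
    qed
  next
    case (2 k)
    then have "k = i" using same by blast
    then show ?thesis using 2(1) at_i unfolding flip_edges_def by simp
  qed
qed

lemma flip_edges_disjoint: "e \<in> flip_edges i j \<Longrightarrow> e \<in> flip_edges i' j' \<Longrightarrow> i = i' \<and> j = j'"
  unfolding flip_edges_def by auto presburger+

lemma low_high_difference_disjoint: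
  assumes "0 \<le> i" "i < int p" "0 \<le> j" "j < int q"
  shows "(cut_matching p q (low_cut p q) - cut_matching p q (high_cut q)) \<inter> flip_edges i j = {}"
proof -
  have "vedge i (j + 1) \<notin> cut_matching p q (low_cut p q)" "hedge i (2*j + 1) \<notin> cut_matching p q (low_cut p q)"
    using assms by (auto simp: low_cut_def)
  moreover have "hedge (i + 1) (2*j) \<in> cut_matching p q (high_cut q)"
    using assms by (auto simp: high_cut_def is_hedge_def)
  ultimately show ?thesis unfolding flip_edges_def by blast
qed

definition test_index :: "nat \<Rightarrow> nat \<Rightarrow> (int \<times> int) option set" where
  "test_index p q = insert None (Some ` ({0..<int p} \<times> {0..<int q}))"

definition test_difference :: "nat \<Rightarrow> nat \<Rightarrow> (int \<times> int) option \<Rightarrow> vtx set set" where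
  "test_difference p q x = (case x of
      None \<Rightarrow> cut_matching p q (low_cut p q) - cut_matching p q (high_cut q)
    | Some (i, j) \<Rightarrow> cut_matching p q (hex_flip_cut p q i j 1) - cut_matching p q (hex_flip_cut p q i j 0))"

lemma card_test_index: "card (test_index p q) = p * q + 1"
  unfolding test_index_def by (simp add: card_image card_cartesian_product)

lemma complete_forcing_set_hits_test_difference:
  assumes p: "1 \<le> p" and q: "1 \<le> q" and S: "complete_forcing_set (para_verts p q) (para_edges p q) S"
    and x: "x \<in> test_index p q"
  shows "S \<inter> test_difference p q x \<noteq> {}"
proof -
  consider "x = None" | i j where "x = Some (i, j)" "0 \<le> i" "i < int p" "0 \<le> j" "j < int q"
    using x unfolding test_index_def by auto
  then show ?thesis
  proof cases
    case 1
    have "vedge 0 0 \<in> cut_matching p q (low_cut p q)" "vedge 0 0 \<notin> cut_matching p q (high_cut q)"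
      using p q by (auto simp: low_cut_def high_cut_def)
    then have "S \<inter> (cut_matching p q (low_cut p q) - cut_matching p q (high_cut q)) \<noteq> {}"
      by (rule complete_forcing_set_hits_difference[OF S
        cut_matching_perfect[OF q monotone_low_cut] cut_matching_perfect[OF q monotone_high_cut]])
    then show ?thesis unfolding 1 test_difference_def by simp
  next
    case (2 i j)
    have "vedge i (j + 1) \<in> cut_matching p q (hex_flip_cut p q i j 1)"
      "vedge i (j + 1) \<notin> cut_matching p q (hex_flip_cut p q i j 0)"
      using 2 by (auto simp: hex_flip_cut_def)
    moreover have "perfect_matching (para_verts p q) (para_edges p q) (cut_matching p q (hex_flip_cut p q i j t))"
      if "t \<in> {0, 1}" for t
      using cut_matching_perfect[OF q monotone_hex_flip_cut] 2 that by auto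
    ultimately have "S \<inter> (cut_matching p q (hex_flip_cut p q i j 1) - cut_matching p q (hex_flip_cut p q i j 0)) \<noteq> {}"
      using complete_forcing_set_hits_difference[OF S] by blast
    then show ?thesis unfolding 2 test_difference_def by simp
  qed
qed

lemma test_differences_disjoint:
  assumes xy: "x \<in> test_index p q" "y \<in> test_index p q"
    and e: "e \<in> test_difference p q x" "e \<in> test_difference p q y"
  shows "x = y"
proof -
  have flip: "e \<in> flip_edges i j \<and> 0 \<le> i \<and> i < int p \<and> 0 \<le> j \<and> j < int q"
    if "z \<in> {x, y}" "z = Some (i, j)" for z i j
    using that xy e hex_flip_difference[of i p j q] unfolding test_index_def test_difference_def by auto
  have low: "e \<in> cut_matching p q (low_cut p q) - cut_matching p q (high_cut q)"
    if "z \<in> {x, y}" "z = None" for z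
    using that e unfolding test_difference_def by auto
  have flip_low: False if "z \<in> {x, y}" "z = Some (i, j)" "z' \<in> {x, y}" "z' = None" for z z' i j
    using flip[OF that(1,2)] low[OF that(3,4)] low_high_difference_disjoint[of i p j q] by blast
  show "x = y"
  proof (cases x)
    case None
    then show ?thesis using flip_low[of y _ _ x] by (cases y) auto
  next
    case (Some c)
    obtain i j where x: "x = Some (i, j)" using Some by (cases c) simp
    show ?thesis
    proof (cases y)
      case None
      then show ?thesis using flip_low[of x i j y] x by simp
    next
      case (Some c')
      obtain i' j' where y: "y = Some (i', j')" using Some by (cases c') simp
      then show ?thesis using flip[of x i j] flip[of y i' j'] flip_edges_disjoint x by auto
    qed
  qed
qed

theorem card_complete_forcing_set_ge:
  assumes p: "1 \<le> p" and q: "1 \<le> q"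
    and S: "complete_forcing_set (para_verts p q) (para_edges p q) S" "finite S"
  shows "p * q + 1 \<le> card S"
proof -
  have "card (test_index p q) \<le> card S"
    by (rule card_le_if_hits_disjoint_family[OF S(2)])
      (use complete_forcing_set_hits_test_difference[OF p q S(1)] test_differences_disjoint in blast)+
  then show ?thesis by (simp add: card_test_index)
qed

theorem mainTheorem8:
  fixes p q :: nat
  assumes "p \<ge> 1" and "q \<ge> 1"
  shows "cf (para_verts p q) (para_edges p q) = p * q + 1"
proof -
  let ?S = "walk_edges (hex_walk p q)"
  have S: "complete_forcing_set (para_verts p q) (para_edges p q) ?S" "finite ?S"
    using complete_forcing_set_walk_edges[OF assms] unfolding walk_edges_def by auto
  have "card ?S = p * q + 1"
    using card_walk_edges_hex_walk[OF assms] card_complete_forcing_set_ge[OF assms S] by simp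
  then show ?thesis
    unfolding cf_def using S card_complete_forcing_set_ge[OF assms]
    by (intro Least_equality) auto
qed

end
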